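(* Let $\alpha\in\mathbb R$ and let $V_\alpha:L^2(\mu)\to L^2(\mu_\alpha)$ be the unitary operator described in the context. Then for every compactly supported $C^1$ function $f$ on $\mathbb R$, $$V_\alpha f(s)=f(s)-\alpha\int_{\mathbb R}\frac{f(s)-f(t)}{s-t}\,d\mu(t)\qquad(\mu_\alpha\text{-a.e. } s),$$ where the integrand at $t=s$ is interpreted as $f'(s)$.
   Context: Let $\mu$ be a nonzero positive Borel measure on $\mathbb R$ with $\int_{\mathbb R}(1+|t|)^{-1}\,d\mu(t)<\infty$, and let $M_t$ denote multiplication by the independent variable $t$ on $L^2(\mu)$. For $\alpha\in\mathbb R$, $A_\alpha$ denotes the (possibly singular, form-bounded) rank one perturbation "$A_\alpha=M_t+\alpha(\,\cdot\,,\mathbf 1)\mathbf 1$", rigorously defined as the self-adjoint operator on $L^2(\mu)$ whose resolvent is, for $\lambda\in\mathbb C\setminus\mathbb R$, $$(A_\alpha-\lambda I)^{-1}f=(M_t-\lambda I)^{-1}f-\frac{\alpha\int\frac{f(t)\,d\mu(t)}{t-\lambda}}{1+\alpha F(\lambda)}\,(M_t-\lambda I)^{-1}\mathbf 1,\qquad F(\lambda)=\int_{\mathbb R}\frac{d\mu(t)}{t-\lambda},$$ and also $(A_\alpha-\lambda I)^{-1}\mathbf 1:=\frac{1}{1+\alpha F(\lambda)}(M_t-\lambda I)^{-1}\mathbf 1$. Let $\mu_\alpha$ be the spectral measure of $A_\alpha$ with respect to $\mathbf 1$, i.e. the unique positive Borel measure with $\frac{F(\lambda)}{1+\alpha F(\lambda)}=\int_{\mathbb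 R}\frac{d\mu_\alpha(s)}{s-\lambda}$ for $\lambda\notin\mathbb R$, and let $M_s$ be multiplication by the independent variable $s$ on $L^2(\mu_\alpha)$. $V_\alpha:L^2(\mu)\to L^2(\mu_\alpha)$ is the unitary operator realizing the spectral representation of $A_\alpha$ with $\mathbf 1\mapsto\mathbf 1$, i.e. $V_\alpha(A_\alpha-\lambda I)^{-1}=(M_s-\lambda I)^{-1}V_\alpha$ and $V_\alpha(A_\alpha-\lambda I)^{-1}\mathbf 1=(M_s-\lambda I)^{-1}\mathbf 1$ for all $\lambda\in\mathbb C\setminus\mathbb R$. *)

theory Defs
  imports "HOL-Analysis.Analysis"
begin

definition cauchy_transform :: "real measure \<Rightarrow> complex \<Rightarrow> complex" where
  "cauchy_transform M z = (\<integral>t. 1 / (complex_of_real t - z) \<partial>M)"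

definition sq_int :: "real measure \<Rightarrow> (real \<Rightarrow> complex) \<Rightarrow> bool" where
  "sq_int M f \<longleftrightarrow> f \<in> borel_measurable M \<and> integrable M (\<lambda>t. (cmod (f t))\<^sup>2)"

text \<open>The resolvent (A_alpha - z)^{-1} f, given by the explicit formula of the context.\<close>
definition res_A :: "real measure \<Rightarrow> real \<Rightarrow> complex \<Rightarrow> (real \<Rightarrow> complex) \<Rightarrow> (real \<Rightarrow> complex)" where
  "res_A M \<alpha> z f = (\<lambda>t. f t / (complex_of_real t - z)
      - (complex_of_real \<alpha> * (\<integral>u. f u / (complex_of_real u - z) \<partial>M))
          / (1 + complex_of_real \<alpha> * cauchy_transform M z)
        * (1 / (complex_of_real t - z)))"

text \<open>The vector (A_alpha - z)^{-1} 1, as defined in the context.\<close>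
definition res_A_one :: "real measure \<Rightarrow> real \<Rightarrow> complex \<Rightarrow> (real \<Rightarrow> complex)" where
  "res_A_one M \<alpha> z = (\<lambda>t. 1 / (1 + complex_of_real \<alpha> * cauchy_transform M z)
        * (1 / (complex_of_real t - z)))"

end

theory Submission
  imports Defs
begin

text \<open>For \<open>z = x + i\<epsilon>\<close> put \<open>g\<^sub>z(t) = (f(t) - f(x)) / (t - z)\<close>. The explicit resolvent of \<open>A\<^sub>\<alpha>\<close> and its
  action on the Cauchy kernels give \<open>V f(s) = (s - z) V g\<^sub>z(s) + \<Phi>(z)\<close> with
  \<open>\<Phi>(z) = f(x) - \<alpha> \<integral> g\<^sub>z d\<mu>\<close>. Since \<open>f\<close> is bounded and Lipschitz, \<open>|g\<^sub>z(t)| \<le> C\<^sub>R / (1 + |t|)\<close> for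
  \<open>|x| \<le> R\<close>, uniformly in \<open>\<epsilon>\<close>, so \<open>\<parallel>V g\<^sub>z\<parallel>\<^sub>2 = \<parallel>g\<^sub>z\<parallel>\<^sub>2\<close> is bounded and Chebyshev's inequality shows that
  on an interval of length \<open>\<eta> \<ge> \<epsilon>\<close> around \<open>x\<close> the set where \<open>|V f - \<Phi>(z)| > \<delta>\<close> has \<open>\<mu>\<^sub>\<alpha>\<close>-measure
  \<open>O(\<eta>\<^sup>2)\<close>. If \<open>\<mu>{x} = 0\<close>, dominated convergence gives \<open>\<Phi>(x + i\<epsilon>) \<rightarrow> \<Psi>(x)\<close>, the right-hand side of
  the formula, which is continuous in \<open>x\<close>. Covering \<open>[-R, R]\<close> by \<open>O(1/\<eta>)\<close> intervals, each with such a
  non-atom, bounds the measure of \<open>{|V f - \<Psi>| > 2\<delta>}\<close> by \<open>O(\<eta>)\<close>, so \<open>V f = \<Psi>\<close> almost everywhere.\<close>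

lemma norm_diff_le_if_vector_derivative_bounded:
  fixes f f' :: "real \<Rightarrow> 'a::real_normed_vector"
  assumes "\<And>x. (f has_vector_derivative f' x) (at x)" and "\<And>x. norm (f' x) \<le> L"
  shows "norm (f t - f x) \<le> L * \<bar>t - x\<bar>"
  using differentiable_bound[of UNIV f "\<lambda>x h. h *\<^sub>R f' x" L t x] assms
  by (simp add: has_vector_derivative_def onorm_scaleR_left[OF bounded_linear_ident] onorm_id)

lemma tendsto_difference_quotient:
  fixes f :: "real \<Rightarrow> complex"
  assumes "(f has_vector_derivative D) (at x)"
  shows "((\<lambda>y. (f y - f x) / complex_of_real (y - x)) \<longlongrightarrow> D) (at x)"
proof -
  have "((\<lambda>y. norm ((f y - f x) - (y - x) *\<^sub>R D) / norm (y - x)) \<longlongrightarrow> 0) (at x)"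
    using assms unfolding has_vector_derivative_def has_derivative_iff_norm by simp
  moreover have "\<forall>\<^sub>F y in at x. norm ((f y - f x) - (y - x) *\<^sub>R D) / norm (y - x)
      = norm ((f y - f x) / complex_of_real (y - x) - D)"
    unfolding eventually_at_filter
  proof (intro always_eventually allI impI)
    fix y :: real assume "y \<noteq> x"
    have "(f y - f x) / complex_of_real (y - x) - D
        = ((f y - f x) - (y - x) *\<^sub>R D) / complex_of_real (y - x)"
      using \<open>y \<noteq> x\<close> by (simp add: field_simps scaleR_conv_of_real)
    then show "norm ((f y - f x) - (y - x) *\<^sub>R D) / norm (y - x)
        = norm ((f y - f x) / complex_of_real (y - x) - D)"
      by (simp add: norm_divide del: of_real_diff)
  qed
  ultimately have "((\<lambda>y. norm ((f y - f x) / complex_of_real (y - x) - D)) \<longlongrightarrow> 0) (at x)"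
    using tendsto_cong by force
  then show ?thesis by (simp add: tendsto_norm_zero_iff LIM_zero_iff)
qed

definition diff_quot :: "(real \<Rightarrow> complex) \<Rightarrow> (real \<Rightarrow> complex) \<Rightarrow> real \<Rightarrow> real \<Rightarrow> complex"
  where "diff_quot f f' s t = (if t = s then f' s else (f s - f t) / complex_of_real (s - t))"

lemma isCont_diff_quot:
  assumes "\<And>x. (f has_vector_derivative f' x) (at x)"
  shows "isCont (\<lambda>s. diff_quot f f' s t) s0"
proof (cases "s0 = t")
  case False
  have "\<forall>\<^sub>F s in nhds s0. diff_quot f f' s t = (f s - f t) / complex_of_real (s - t)"
    using t1_space_nhds[OF False] by eventually_elim (simp add: diff_quot_def)
  moreover have "isCont (\<lambda>s. (f s - f t) / complex_of_real (s - t)) s0"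
    using False assms by (intro continuous_intros has_vector_derivative_continuous) auto
  ultimately show ?thesis by (simp add: isCont_cong)
next
  case True
  have "\<forall>\<^sub>F s in at t. (f s - f t) / complex_of_real (s - t) = diff_quot f f' s t"
    by (auto simp: eventually_at_filter diff_quot_def)
  with tendsto_difference_quotient[OF assms] have "((\<lambda>s. diff_quot f f' s t) \<longlongrightarrow> f' t) (at t)"
    using tendsto_cong by force
  then show ?thesis using True by (simp add: isCont_def diff_quot_def)
qed

definition cauchy_weight :: "real \<Rightarrow> real"
  where "cauchy_weight t = 1 / (1 + \<bar>t\<bar>)"

lemma cauchy_weight_pos: "0 < cauchy_weight t"
  and cauchy_weight_le_1: "cauchy_weight t \<le> 1"
  by (auto simp: cauchy_weight_def)

lemma borel_measurable_cauchy_weight [measurable]: "cauchy_weight \<in> borel_measurable borel"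
  unfolding cauchy_weight_def by measurable

definition quotient_bound :: "real \<Rightarrow> real \<Rightarrow> real \<Rightarrow> real"
  where "quotient_bound L M R = L * (2 * R + 3) + 8 * M"

lemma le_quotient_bound_weight:
  fixes q L M R x t :: real
  assumes "0 \<le> L" "0 \<le> M" "\<bar>x\<bar> \<le> R" "q \<le> L" "t \<noteq> x \<Longrightarrow> q \<le> 2 * M / \<bar>t - x\<bar>"
  shows "q \<le> quotient_bound L M R * cauchy_weight t"
proof (cases "\<bar>t\<bar> \<le> 2 * R + 2")
  case True
  have "L * (1 + \<bar>t\<bar>) \<le> L * (2 * R + 3)"
    using True assms by (intro mult_left_mono) auto
  then have "L \<le> L * (2 * R + 3) * cauchy_weight t"
    by (simp add: cauchy_weight_def field_simps)
  also have "\<dots> \<le> quotient_bound L M R * cauchy_weight t"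
    unfolding quotient_bound_def using assms cauchy_weight_pos[of t] by (intro mult_right_mono) auto
  finally show ?thesis using assms by linarith
next
  case False
  then have tx: "\<bar>t\<bar> / 2 \<le> \<bar>t - x\<bar>" "1 \<le> \<bar>t\<bar>"
    using assms by (auto simp: abs_if split: if_splits)
  moreover have "t \<noteq> x" using False assms by auto
  ultimately have "q \<le> 2 * M / \<bar>t - x\<bar>" using assms by auto
  also have "\<dots> \<le> 2 * M / (\<bar>t\<bar> / 2)"
    using tx assms by (intro divide_left_mono) (auto intro!: mult_pos_pos)
  also have "\<dots> \<le> 8 * M * cauchy_weight t"
    using tx assms mult_left_mono[OF tx(2), of M] by (simp add: cauchy_weight_def field_simps)
  also have "\<dots> \<le> quotient_bound L M R * cauchy_weight t"
    unfolding quotient_bound_def using assms cauchy_weight_pos[of t] by (intro mult_right_mono) auto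
  finally show ?thesis .
qed

lemma norm_cauchy_kernel_le_weight:
  assumes "Im z \<noteq> 0"
  shows "cmod (1 / (complex_of_real t - z)) \<le> (1 + (1 + cmod z) / \<bar>Im z\<bar>) * cauchy_weight t"
proof -
  define d where "d = cmod (complex_of_real t - z)"
  have d_ge: "\<bar>Im z\<bar> \<le> d" unfolding d_def
    using abs_Im_le_cmod[of "complex_of_real t - z"] by simp
  have "1 + \<bar>t\<bar> \<le> (1 + cmod z) + d"
    using norm_triangle_ineq[of "complex_of_real t - z" z] by (simp add: d_def)
  also have "1 + cmod z \<le> (1 + cmod z) / \<bar>Im z\<bar> * d"
    using mult_left_mono[OF d_ge, of "1 + cmod z"] assms by (simp add: field_simps)
  finally have "1 + \<bar>t\<bar> \<le> (1 + (1 + cmod z) / \<bar>Im z\<bar>) * d"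
    by (simp add: algebra_simps)
  moreover have "0 < d" using d_ge assms by linarith
  ultimately show ?thesis
    by (simp add: d_def norm_divide cauchy_weight_def field_simps)
qed

locale bounded_derivative_fun =
  fixes f f' :: "real \<Rightarrow> complex" and L M :: real
  assumes has_derivative: "\<And>x. (f has_vector_derivative f' x) (at x)"
    and norm_derivative_le: "\<And>x. cmod (f' x) \<le> L"
    and norm_le: "\<And>x. cmod (f x) \<le> M"
begin

lemma derivative_bound_nonneg: "0 \<le> L"
  using norm_derivative_le[of 0] norm_ge_zero[of "f' 0"] by linarith

lemma bound_nonneg: "0 \<le> M"
  using norm_le[of 0] norm_ge_zero[of "f 0"] by linarith

lemma continuous: "continuous_on UNIV f"
  using has_derivative by (meson continuous_at_imp_continuous_on has_vector_derivative_continuous)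

lemma borel_measurable [measurable]: "f \<in> borel_measurable borel"
  using continuous by (rule borel_measurable_continuous_onI)

lemma norm_diff_le_Lipschitz: "cmod (f t - f x) \<le> L * \<bar>t - x\<bar>"
  using norm_diff_le_if_vector_derivative_bounded[OF has_derivative norm_derivative_le] .

lemma norm_diff_le_bound: "cmod (f t - f x) \<le> 2 * M"
  using norm_triangle_ineq4[of "f t" "f x"] norm_le[of t] norm_le[of x] by simp

lemma norm_diff_quotient_le_weight:
  assumes "\<bar>t - x\<bar> \<le> cmod d" and "\<bar>x\<bar> \<le> R"
  shows "cmod ((f t - f x) / d) \<le> quotient_bound L M R * cauchy_weight t"
proof (rule le_quotient_bound_weight[OF derivative_bound_nonneg bound_nonneg assms(2)])
  show "cmod ((f t - f x) / d) \<le> L"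
  proof (cases "d = 0")
    case False
    have "L * \<bar>t - x\<bar> \<le> L * cmod d"
      using assms(1) derivative_bound_nonneg by (rule mult_left_mono)
    then have "cmod (f t - f x) \<le> L * cmod d"
      using norm_diff_le_Lipschitz[of t x] by linarith
    then show ?thesis
      using False by (simp add: norm_divide pos_divide_le_eq)
  qed (simp add: derivative_bound_nonneg)
  assume "t \<noteq> x"
  then have "0 < \<bar>t - x\<bar>" by simp
  then have "cmod ((f t - f x) / d) \<le> cmod (f t - f x) / \<bar>t - x\<bar>"
    unfolding norm_divide using assms(1) by (intro frac_le) auto
  also have "\<dots> \<le> 2 * M / \<bar>t - x\<bar>"
    using norm_diff_le_bound by (rule divide_right_mono) simp
  finally show "cmod ((f t - f x) / d) \<le> 2 * M / \<bar>t - x\<bar>" .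
qed

lemma norm_diff_quot_le_weight:
  assumes "\<bar>s\<bar> \<le> R"
  shows "cmod (diff_quot f f' s t) \<le> quotient_bound L M R * cauchy_weight t"
proof (cases "t = s")
  case True
  have "cmod (f' s) \<le> quotient_bound L M R * cauchy_weight s"
    by (rule le_quotient_bound_weight[OF derivative_bound_nonneg bound_nonneg assms
        norm_derivative_le]) simp
  then show ?thesis using True by (simp add: diff_quot_def)
next
  case False
  then have "diff_quot f f' s t = (f t - f s) / complex_of_real (t - s)"
    by (simp add: diff_quot_def) (metis minus_diff_eq minus_divide_divide of_real_minus)
  then show ?thesis using norm_diff_quotient_le_weight[OF _ assms, of t "complex_of_real (t - s)"]
    by (simp del: of_real_diff)
qed

end

lemma bounded_derivative_fun_if_compact_support:
  assumes "\<And>x. (f has_vector_derivative f' x) (at x)" and "continuous_on UNIV f'"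
    and "compact (closure {x. f x \<noteq> 0})"
  obtains L M where "bounded_derivative_fun f f' L M"
proof -
  define S where "S = closure {x. f x \<noteq> 0}"
  have f0: "f x = 0" if "x \<notin> S" for x
    using that closure_subset[of "{x. f x \<noteq> 0}"] unfolding S_def by blast
  have f'0: "f' x = 0" if "x \<notin> S" for x
  proof -
    have "open (- S)" by (simp add: S_def open_Compl)
    have "((\<lambda>_. 0) has_vector_derivative 0) (at x)" by simp
    then have "(f has_vector_derivative 0) (at x)"
      by (rule has_vector_derivative_transform_within_open[where S = "- S"])
         (use that f0 \<open>open (- S)\<close> in auto)
    then show ?thesis using vector_derivative_unique_at[OF assms(1)] by blast
  qed
  have bounded_image: "\<exists>B. \<forall>x\<in>S. cmod (g x) \<le> B" if "continuous_on UNIV g" for g :: "real \<Rightarrow> complex"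
  proof -
    have "bounded (g ` S)"
      using assms(3) unfolding S_def
      by (intro compact_imp_bounded compact_continuous_image continuous_on_subset[OF that]) auto
    then show ?thesis by (simp add: bounded_iff)
  qed
  obtain L where L: "\<And>x. x \<in> S \<Longrightarrow> cmod (f' x) \<le> L"
    using bounded_image[OF assms(2)] by blast
  have "continuous_on UNIV f"
    using assms(1) by (meson continuous_at_imp_continuous_on has_vector_derivative_continuous)
  then obtain M where M: "\<And>x. x \<in> S \<Longrightarrow> cmod (f x) \<le> M"
    using bounded_image by blast
  have "bounded_derivative_fun f f' (max L 0) (max M 0)"
  proof unfold_locales
    fix x
    show "cmod (f' x) \<le> max L 0" using L f'0[of x] by (cases "x \<in> S") (auto simp: le_max_iff_disj)
    show "cmod (f x) \<le> max M 0" using M f0[of x] by (cases "x \<in> S") (auto simp: le_max_iff_disj)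
  qed (rule assms(1))
  then show ?thesis by (rule that)
qed

lemma emeasure_deviation_le_Chebyshev:
  fixes h d u :: "'a \<Rightarrow> complex"
  assumes A: "A \<in> sets \<nu>" and h: "h \<in> borel_measurable \<nu>" and u: "u \<in> borel_measurable \<nu>"
    and factor: "AE s in \<nu>. h s - c = d s * u s"
    and d_le: "\<And>s. s \<in> A \<Longrightarrow> cmod (d s) \<le> r" and "0 < \<delta>"
  shows "emeasure \<nu> {s \<in> A. \<delta> < cmod (h s - c)}
    \<le> ennreal (r\<^sup>2 / \<delta>\<^sup>2) * (\<integral>\<^sup>+ s. ennreal ((cmod (u s))\<^sup>2) \<partial>\<nu>)"
proof -
  let ?S = "{s \<in> A. \<delta> < cmod (h s - c)}"
  have S: "?S \<in> sets \<nu>"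
    using A h by measurable
  have "emeasure \<nu> ?S = (\<integral>\<^sup>+ s. indicator ?S s \<partial>\<nu>)"
    using S by simp
  also have "\<dots> \<le> (\<integral>\<^sup>+ s. ennreal (r\<^sup>2 / \<delta>\<^sup>2) * ennreal ((cmod (u s))\<^sup>2) \<partial>\<nu>)"
    using factor
  proof (intro nn_integral_mono_AE, eventually_elim)
    case (elim s)
    show ?case
    proof (cases "s \<in> ?S")
      case True
      then have "\<delta> < cmod (d s) * cmod (u s)"
        using elim by (simp add: norm_mult)
      also have "\<dots> \<le> r * cmod (u s)"
        using d_le True by (intro mult_right_mono) auto
      finally have "\<delta>\<^sup>2 \<le> (r * cmod (u s))\<^sup>2"
        using \<open>0 < \<delta>\<close> by (intro power_mono) auto
      then have "1 \<le> r\<^sup>2 / \<delta>\<^sup>2 * (cmod (u s))\<^sup>2"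
        using \<open>0 < \<delta>\<close> by (simp add: field_simps)
      then show ?thesis
        using True by (simp add: ennreal_mult'[symmetric] ennreal_leI)
    qed simp
  qed
  also have "\<dots> = ennreal (r\<^sup>2 / \<delta>\<^sup>2) * (\<integral>\<^sup>+ s. ennreal ((cmod (u s))\<^sup>2) \<partial>\<nu>)"
    using u by (intro nn_integral_cmult) measurable
  finally show ?thesis .
qed

lemma interval_partition_index:
  fixes R s :: real
  assumes "0 < R" "0 < N" "-R \<le> s" "s < R"
  obtains j where "j < N" "-R + real j * (2 * R / N) \<le> s" "s < -R + real (Suc j) * (2 * R / N)"
proof -
  define \<eta> where "\<eta> = 2 * R / N"
  have "0 < \<eta>" using assms by (simp add: \<eta>_def)
  define j where "j = nat \<lfloor>(s + R) / \<eta>\<rfloor>"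
  have "0 \<le> (s + R) / \<eta>" using assms \<open>0 < \<eta>\<close> by simp
  then have j: "real j \<le> (s + R) / \<eta>" "(s + R) / \<eta> < real j + 1"
    unfolding j_def by linarith+
  have "(s + R) / \<eta> < N"
    using assms \<open>0 < \<eta>\<close> by (simp add: \<eta>_def field_simps)
  then have "j < N" using j(1) by linarith
  moreover have "-R + real j * \<eta> \<le> s" "s < -R + real (Suc j) * \<eta>"
    using j \<open>0 < \<eta>\<close> by (simp_all add: field_simps)
  ultimately show ?thesis using that unfolding \<eta>_def by blast
qed

context
  fixes \<nu> :: "real measure" and h \<Psi> :: "real \<Rightarrow> complex"
  assumes sets_eq: "sets \<nu> = sets borel" and h: "h \<in> borel_measurable \<nu>"
    and \<Psi>: "continuous_on UNIV \<Psi>"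
begin

text \<open>Cover \<open>[-R, R)\<close> by \<open>N\<close> intervals of length \<open>2R/N\<close>; on each of them \<open>\<Psi>\<close> varies by less than
  \<open>\<delta>\<close>, so a large deviation from \<open>\<Psi>\<close> is a deviation from the value of \<open>\<Psi>\<close> at one point.\<close>

lemma emeasure_large_deviation_le:
  fixes N :: nat
  assumes "0 < R" "0 < N"
    and local_bound: "\<And>a b. -R \<le> a \<Longrightarrow> a < b \<Longrightarrow> b \<le> R \<Longrightarrow>
      \<exists>x\<in>{a..b}. emeasure \<nu> {s \<in> {a..b}. \<delta> < cmod (h s - \<Psi> x)} \<le> ennreal (C * (b - a)\<^sup>2)"
    and modulus: "\<And>s y. s \<in> {-R..R} \<Longrightarrow> y \<in> {-R..R} \<Longrightarrow> dist y s \<le> 2 * R / N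
      \<Longrightarrow> dist (\<Psi> y) (\<Psi> s) < \<delta>"
  shows "emeasure \<nu> {s \<in> {-R..<R}. 2 * \<delta> < cmod (h s - \<Psi> s)} \<le> ennreal (4 * R\<^sup>2 * C / N)"
proof -
  have [measurable]: "h \<in> borel_measurable \<nu>" "\<Psi> \<in> borel_measurable \<nu>"
    "{a..b} \<in> sets \<nu>" "{a..<b} \<in> sets \<nu>" for a b :: real
    using h borel_measurable_continuous_onI[OF \<Psi>]
    by (simp_all add: sets_eq measurable_cong_sets[OF sets_eq refl])
  define \<eta> where "\<eta> = 2 * R / N"
  define a where "a j = -R + real j * \<eta>" for j
  have "0 < \<eta>" using assms by (simp add: \<eta>_def)
  have a_step: "-R \<le> a j" "a j < a (Suc j)" "a (Suc j) - a j = \<eta>" for j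
    using \<open>0 < \<eta>\<close> by (simp_all add: a_def algebra_simps)
  have a_le: "a (Suc j) \<le> R" if "j < N" for j
  proof -
    have "real (Suc j) * \<eta> \<le> N * \<eta>"
      using that \<open>0 < \<eta>\<close> by (intro mult_right_mono) auto
    then show ?thesis using \<open>0 < N\<close> by (simp add: a_def \<eta>_def)
  qed
  let ?D = "\<lambda>j x. {s \<in> {a j..a (Suc j)}. \<delta> < cmod (h s - \<Psi> x)}"
  have "\<forall>j\<in>{..<N}. \<exists>x\<in>{a j..a (Suc j)}. emeasure \<nu> (?D j x) \<le> ennreal (C * \<eta>\<^sup>2)"
    using local_bound[OF a_step(1,2) a_le] unfolding a_step(3) by blast
  then obtain x where "\<forall>j\<in>{..<N}. x j \<in> {a j..a (Suc j)} \<and> emeasure \<nu> (?D j (x j)) \<le> ennreal (C * \<eta>\<^sup>2)"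
    unfolding Bex_def by (rule bchoice[THEN exE])
  then have x: "\<And>j. j < N \<Longrightarrow> x j \<in> {a j..a (Suc j)}"
    and x_bound: "\<And>j. j < N \<Longrightarrow> emeasure \<nu> (?D j (x j)) \<le> ennreal (C * \<eta>\<^sup>2)"
    by auto
  have cover: "{s \<in> {-R..<R}. 2 * \<delta> < cmod (h s - \<Psi> s)} \<subseteq> (\<Union>j<N. ?D j (x j))"
  proof
    fix s assume "s \<in> {s \<in> {-R..<R}. 2 * \<delta> < cmod (h s - \<Psi> s)}"
    then have s: "-R \<le> s" "s < R" and big: "2 * \<delta> < cmod (h s - \<Psi> s)" by auto
    obtain j where j: "j < N" "a j \<le> s" "s < a (Suc j)"
      using interval_partition_index[OF \<open>0 < R\<close> \<open>0 < N\<close> s] unfolding a_def \<eta>_def by blast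
    have "dist (\<Psi> (x j)) (\<Psi> s) < \<delta>"
      using modulus[of s "x j"] s x[OF j(1)] j a_step(1,3)[of j] a_le[OF j(1)]
      by (auto simp: dist_real_def \<eta>_def)
    then have "\<delta> < cmod (h s - \<Psi> (x j))"
      using big norm_triangle_ineq[of "h s - \<Psi> (x j)" "\<Psi> (x j) - \<Psi> s"] by (simp add: dist_norm)
    then show "s \<in> (\<Union>j<N. ?D j (x j))"
      using j by auto
  qed
  have pieces [measurable]: "?D j (x j) \<in> sets \<nu>" for j
    by measurable
  have "emeasure \<nu> {s \<in> {-R..<R}. 2 * \<delta> < cmod (h s - \<Psi> s)} \<le> emeasure \<nu> (\<Union>j<N. ?D j (x j))"
    using cover by (intro emeasure_mono) measurable
  also have "\<dots> \<le> (\<Sum>j<N. emeasure \<nu> (?D j (x j)))"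
    using pieces by (intro emeasure_subadditive_finite) (simp_all add: image_subset_iff)
  also have "\<dots> \<le> (\<Sum>j<N. ennreal (C * \<eta>\<^sup>2))"
    using x_bound by (intro sum_mono) auto
  also have "\<dots> = ennreal (real N * (C * \<eta>\<^sup>2))"
    by (cases "0 \<le> C") (auto simp: ennreal_of_nat_eq_real_of_nat ennreal_mult ennreal_neg
        mult_nonpos_nonneg mult_nonneg_nonpos)
  also have "real N * (C * \<eta>\<^sup>2) = 4 * R\<^sup>2 * C / N"
    using \<open>0 < N\<close> by (simp add: \<eta>_def power2_eq_square)
  finally show ?thesis .
qed

context
  assumes local_bound: "\<And>R \<delta>. 0 < \<delta> \<Longrightarrow> \<exists>C. \<forall>a b. -R \<le> a \<longrightarrow> a < b \<longrightarrow> b \<le> R \<longrightarrow>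
      (\<exists>x\<in>{a..b}. emeasure \<nu> {s \<in> {a..b}. \<delta> < cmod (h s - \<Psi> x)} \<le> ennreal (C * (b - a)\<^sup>2))"
begin

lemma emeasure_large_deviation_eq_0:
  assumes "0 < R" "0 < \<delta>"
  shows "emeasure \<nu> {s \<in> {-R..<R}. 2 * \<delta> < cmod (h s - \<Psi> s)} = 0"
proof -
  obtain C where C: "\<And>a b. -R \<le> a \<Longrightarrow> a < b \<Longrightarrow> b \<le> R \<Longrightarrow>
      \<exists>x\<in>{a..b}. emeasure \<nu> {s \<in> {a..b}. \<delta> < cmod (h s - \<Psi> x)} \<le> ennreal (C * (b - a)\<^sup>2)"
    using local_bound[OF \<open>0 < \<delta>\<close>, of R] by blast
  obtain \<eta> where "0 < \<eta>" and \<eta>: "\<And>s y. s \<in> {-R..R} \<Longrightarrow> y \<in> {-R..R} \<Longrightarrow> dist y s < \<eta>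
      \<Longrightarrow> dist (\<Psi> y) (\<Psi> s) < \<delta>"
    using uniformly_continuous_onE[OF compact_uniformly_continuous[OF
        continuous_on_subset[OF \<Psi> subset_UNIV] compact_Icc] \<open>0 < \<delta>\<close>] by blast
  have small: "emeasure \<nu> {s \<in> {-R..<R}. 2 * \<delta> < cmod (h s - \<Psi> s)} \<le> ennreal e" if "0 < e" for e
  proof -
    obtain N :: nat where N: "2 * R / \<eta> < N" "4 * R\<^sup>2 * C / e < N"
      using reals_Archimedean2[of "max (2 * R / \<eta>) (4 * R\<^sup>2 * C / e)"] by auto
    moreover have "0 < 2 * R / \<eta>" using \<open>0 < R\<close> \<open>0 < \<eta>\<close> by simp
    ultimately have "0 < N" by linarith
    have "2 * R / N < \<eta>"
      using N(1) \<open>0 < N\<close> \<open>0 < R\<close> \<open>0 < \<eta>\<close> by (simp add: field_simps)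
    then have "emeasure \<nu> {s \<in> {-R..<R}. 2 * \<delta> < cmod (h s - \<Psi> s)} \<le> ennreal (4 * R\<^sup>2 * C / N)"
      using \<eta> by (intro emeasure_large_deviation_le[OF \<open>0 < R\<close> \<open>0 < N\<close> C]) auto
    also have "\<dots> \<le> ennreal e"
      using N(2) \<open>0 < N\<close> \<open>0 < e\<close> by (intro ennreal_leI) (simp add: field_simps)
    finally show ?thesis .
  qed
  have "emeasure \<nu> {s \<in> {-R..<R}. 2 * \<delta> < cmod (h s - \<Psi> s)} \<le> 0"
    by (rule ennreal_le_epsilon) (simp only: add_0 small)
  then show ?thesis by simp
qed

lemma AE_eq_if_local_deviation_bound: "AE s in \<nu>. h s = \<Psi> s"
proof -
  have [measurable]: "h \<in> borel_measurable \<nu>" "\<Psi> \<in> borel_measurable \<nu>"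
    "{a..b} \<in> sets \<nu>" "{a..<b} \<in> sets \<nu>" for a b :: real
    using h borel_measurable_continuous_onI[OF \<Psi>]
    by (simp_all add: sets_eq measurable_cong_sets[OF sets_eq refl])
  define B where "B n m = {s \<in> {-real (Suc n)..<real (Suc n)}.
      2 * inverse (real (Suc m)) < cmod (h s - \<Psi> s)}" for n m :: nat
  have "B n m \<in> sets \<nu>" for n m
    unfolding B_def by measurable
  then have "B n m \<in> null_sets \<nu>" for n m
    using emeasure_large_deviation_eq_0[of "real (Suc n)" "inverse (real (Suc m))"]
    unfolding null_sets_def by (simp add: B_def)
  then have "(\<Union>n m. B n m) \<in> null_sets \<nu>" by blast
  then show ?thesis
  proof (rule AE_I')
    show "{s \<in> space \<nu>. h s \<noteq> \<Psi> s} \<subseteq> (\<Union>n m. B n m)"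
    proof safe
      fix s assume "h s \<noteq> \<Psi> s"
      then have "0 < cmod (h s - \<Psi> s) / 2" by simp
      then obtain m where m: "inverse (real (Suc m)) < cmod (h s - \<Psi> s) / 2"
        using reals_Archimedean by blast
      obtain n where "\<bar>s\<bar> \<le> real n"
        using real_arch_simple by blast
      with m have "s \<in> B n m" by (auto simp: B_def)
      then show "s \<in> (\<Union>n m. B n m)" by blast
    qed
  qed
qed

end

end

locale cauchy_measure =
  fixes \<mu> :: "real measure"
  assumes sets_eq: "sets \<mu> = sets borel"
    and weight_finite: "(\<integral>\<^sup>+ t. ennreal (1 / (1 + \<bar>t\<bar>)) \<partial>\<mu>) < \<infinity>"
begin

lemma borel_measurable_iff: "g \<in> borel_measurable \<mu> \<longleftrightarrow> g \<in> borel_measurable borel"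
  by (simp add: measurable_cong_sets[OF sets_eq refl])

lemma integrable_weight: "integrable \<mu> cauchy_weight"
  using weight_finite cauchy_weight_pos
  by (intro integrableI_bounded) (auto simp: borel_measurable_iff cauchy_weight_def)

lemma
  fixes h :: "real \<Rightarrow> complex"
  assumes h: "h \<in> borel_measurable borel" and le: "\<And>t. cmod (h t) \<le> K * cauchy_weight t"
  shows integrable_if_le_weight: "integrable \<mu> h"
    and sq_int_if_le_weight: "sq_int \<mu> h"
    and integral_sq_le_weight: "(\<integral>t. (cmod (h t))\<^sup>2 \<partial>\<mu>) \<le> K\<^sup>2 * (\<integral>t. cauchy_weight t \<partial>\<mu>)"
proof -
  have "0 \<le> K * cauchy_weight 0" using le[of 0] norm_ge_zero[of "h 0"] by linarith
  then have "0 \<le> K" using cauchy_weight_pos[of 0] by (simp add: zero_le_mult_iff)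
  have sq_le: "(cmod (h t))\<^sup>2 \<le> K\<^sup>2 * cauchy_weight t" for t
  proof -
    have "(cmod (h t))\<^sup>2 \<le> (K * cauchy_weight t)\<^sup>2"
      using le[of t] by (intro power_mono) auto
    also have "\<dots> = K\<^sup>2 * (cauchy_weight t * cauchy_weight t)"
      by (simp add: power2_eq_square)
    also have "\<dots> \<le> K\<^sup>2 * cauchy_weight t"
      using cauchy_weight_pos[of t] cauchy_weight_le_1[of t]
      by (intro mult_left_mono mult_left_le) auto
    finally show ?thesis .
  qed
  have h_meas: "h \<in> borel_measurable \<mu>" using h by (simp add: borel_measurable_iff)
  show "integrable \<mu> h"
  proof (rule Bochner_Integration.integrable_bound[of _ "\<lambda>t. K * cauchy_weight t"])
    show "integrable \<mu> (\<lambda>t. K * cauchy_weight t)" using integrable_weight by simp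
    show "AE t in \<mu>. norm (h t) \<le> norm (K * cauchy_weight t)"
      using le \<open>0 \<le> K\<close> cauchy_weight_pos by (intro AE_I2) (simp add: abs_mult less_imp_le)
  qed (rule h_meas)
  have sq_int: "integrable \<mu> (\<lambda>t. (cmod (h t))\<^sup>2)"
  proof (rule Bochner_Integration.integrable_bound[of _ "\<lambda>t. K\<^sup>2 * cauchy_weight t"])
    show "integrable \<mu> (\<lambda>t. K\<^sup>2 * cauchy_weight t)" using integrable_weight by simp
    show "AE t in \<mu>. norm ((cmod (h t))\<^sup>2) \<le> norm (K\<^sup>2 * cauchy_weight t)"
      using sq_le cauchy_weight_pos by (intro AE_I2) (simp add: abs_mult less_imp_le)
  qed (use h_meas in measurable)
  then show "sq_int \<mu> h" using h_meas by (simp add: sq_int_def)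
  show "(\<integral>t. (cmod (h t))\<^sup>2 \<partial>\<mu>) \<le> K\<^sup>2 * (\<integral>t. cauchy_weight t \<partial>\<mu>)"
    using integral_mono[OF sq_int _ sq_le] integrable_weight by simp
qed

lemma emeasure_Icc_finite: "emeasure \<mu> {a..b} < \<infinity>"
proof -
  define c where "c = 1 + max \<bar>a\<bar> \<bar>b\<bar>"
  have "0 \<le> c" by (simp add: c_def)
  have "indicator {a..b} t \<le> ennreal c * ennreal (cauchy_weight t)" for t :: real
  proof (cases "t \<in> {a..b}")
    case True
    then have "1 \<le> c * cauchy_weight t"
      by (auto simp: c_def cauchy_weight_def field_simps)
    then show ?thesis
      using True \<open>0 \<le> c\<close> cauchy_weight_pos[of t] by (simp add: ennreal_mult[symmetric] ennreal_leI)
  qed simp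
  then have "(\<integral>\<^sup>+ t. indicator {a..b} t \<partial>\<mu>) \<le> (\<integral>\<^sup>+ t. ennreal c * ennreal (cauchy_weight t) \<partial>\<mu>)"
    by (intro nn_integral_mono)
  then have "emeasure \<mu> {a..b} \<le> (\<integral>\<^sup>+ t. ennreal c * ennreal (cauchy_weight t) \<partial>\<mu>)"
    by (simp add: sets_eq)
  also have "\<dots> = ennreal c * (\<integral>\<^sup>+ t. ennreal (cauchy_weight t) \<partial>\<mu>)"
    by (rule nn_integral_cmult) (simp add: borel_measurable_iff)
  also have "\<dots> < \<infinity>"
    using weight_finite by (simp add: cauchy_weight_def ennreal_mult_less_top)
  finally show ?thesis .
qed

lemma exists_non_atom:
  assumes "a < b"
  obtains x where "x \<in> {a<..<b}" "emeasure \<mu> {x} = 0"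
proof -
  have Icc: "{a..b} \<in> sets \<mu>" by (simp add: sets_eq)
  interpret finite_measure "restrict_space \<mu> {a..b}"
    using emeasure_Icc_finite Icc
    by (intro finite_measureI) (simp add: space_restrict_space emeasure_restrict_space less_top)
  have "countable {x. measure (restrict_space \<mu> {a..b}) {x} \<noteq> 0}"
    by (rule countable_support)
  moreover have "uncountable {a<..<b}"
    using assms by (simp add: uncountable_open_interval)
  ultimately have "\<not> {a<..<b} \<subseteq> {x. measure (restrict_space \<mu> {a..b}) {x} \<noteq> 0}"
    using countable_subset by blast
  then obtain x where x: "x \<in> {a<..<b}" "measure (restrict_space \<mu> {a..b}) {x} = 0"
    by blast
  then have "measure \<mu> {x} = 0"
    using Icc by (simp add: measure_restrict_space sets_eq)
  moreover have "emeasure \<mu> {x} < \<infinity>"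
    using x emeasure_Icc_finite[of a b] emeasure_mono[OF _ Icc, of "{x}"] by auto
  ultimately have "emeasure \<mu> {x} = 0"
    by (simp add: emeasure_eq_ennreal_measure less_top)
  with x(1) show ?thesis by (rule that)
qed

lemma sq_int_if_compact_support:
  fixes h :: "real \<Rightarrow> complex"
  assumes "h \<in> borel_measurable borel" and "\<And>t. cmod (h t) \<le> M"
    and "compact (closure {t. h t \<noteq> 0})"
  shows "sq_int \<mu> h"
proof -
  obtain R0 where R0: "\<And>t. t \<in> closure {t. h t \<noteq> 0} \<Longrightarrow> \<bar>t\<bar> \<le> R0"
    using compact_imp_bounded[OF assms(3)] by (auto simp: bounded_iff)
  define R where "R = max R0 0"
  have "0 \<le> R" by (simp add: R_def)
  have outside: "h t = 0" if "R < \<bar>t\<bar>" for t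
    using R0[of t] closure_subset[of "{t. h t \<noteq> 0}"] that by (force simp: R_def)
  show ?thesis
  proof (rule sq_int_if_le_weight[OF assms(1)])
    fix t
    have "0 \<le> M" using assms(2)[of t] norm_ge_zero[of "h t"] by linarith
    show "cmod (h t) \<le> M * (1 + R) * cauchy_weight t"
    proof (cases "R < \<bar>t\<bar>")
      case False
      then have "M * (1 + \<bar>t\<bar>) \<le> M * (1 + R)"
        using \<open>0 \<le> M\<close> by (intro mult_left_mono) auto
      moreover have "cmod (h t) * (1 + \<bar>t\<bar>) \<le> M * (1 + \<bar>t\<bar>)"
        using assms(2)[of t] by (intro mult_right_mono) auto
      ultimately show ?thesis
        by (simp add: cauchy_weight_def field_simps)
    next
      case True
      then show ?thesis using outside \<open>0 \<le> R\<close> \<open>0 \<le> M\<close> cauchy_weight_pos[of t] by simp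
    qed
  qed
qed

lemma continuous_integral_diff_quot:
  assumes "bounded_derivative_fun f f' L M"
  shows "continuous_on UNIV (\<lambda>s. \<integral>t. diff_quot f f' s t \<partial>\<mu>)"
proof -
  interpret bounded_derivative_fun f f' L M by fact
  have [measurable]: "diff_quot f f' s \<in> borel_measurable \<mu>" for s
    unfolding borel_measurable_iff diff_quot_def by measurable
  have "isCont (\<lambda>s. \<integral>t. diff_quot f f' s t \<partial>\<mu>) a" for a
  proof (rule continuous_at_sequentiallyI)
    fix u assume u: "u \<longlonglongrightarrow> a"
    then obtain B where B: "\<And>n. \<bar>u n\<bar> \<le> B"
      using convergent_imp_Bseq[OF convergentI[OF u]] by (auto simp: Bseq_def)
    show "(\<lambda>n. \<integral>t. diff_quot f f' (u n) t \<partial>\<mu>) \<longlonglongrightarrow> (\<integral>t. diff_quot f f' a t \<partial>\<mu>)"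
    proof (rule integral_dominated_convergence[where w = "\<lambda>t. quotient_bound L M B * cauchy_weight t"])
      show "integrable \<mu> (\<lambda>t. quotient_bound L M B * cauchy_weight t)"
        using integrable_weight by simp
      show "AE t in \<mu>. (\<lambda>n. diff_quot f f' (u n) t) \<longlonglongrightarrow> diff_quot f f' a t"
        using isCont_tendsto_compose[OF isCont_diff_quot[OF has_derivative] u] by simp
      show "AE t in \<mu>. norm (diff_quot f f' (u n) t) \<le> quotient_bound L M B * cauchy_weight t" for n
        using norm_diff_quot_le_weight[OF B] by simp
    qed measurable
  qed
  then show ?thesis by (simp add: continuous_at_imp_continuous_on)
qed

lemma tendsto_integral_quotient_at_non_atom:
  assumes "bounded_derivative_fun f f' L M" and "emeasure \<mu> {x} = 0"
  shows "(\<lambda>n. \<integral>t. (f t - f x) / (complex_of_real t - Complex x (inverse (Suc n))) \<partial>\<mu>)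
    \<longlonglongrightarrow> (\<integral>t. diff_quot f f' x t \<partial>\<mu>)"
proof (rule integral_dominated_convergence[where w = "\<lambda>t. quotient_bound L M \<bar>x\<bar> * cauchy_weight t"])
  interpret bounded_derivative_fun f f' L M by fact
  show "integrable \<mu> (\<lambda>t. quotient_bound L M \<bar>x\<bar> * cauchy_weight t)"
    using integrable_weight by simp
  show "AE t in \<mu>. norm ((f t - f x) / (complex_of_real t - Complex x (inverse (Suc n))))
      \<le> quotient_bound L M \<bar>x\<bar> * cauchy_weight t" for n
  proof (intro AE_I2 norm_diff_quotient_le_weight)
    show "\<bar>t - x\<bar> \<le> cmod (complex_of_real t - Complex x (inverse (Suc n)))" for t
      using abs_Re_le_cmod[of "complex_of_real t - Complex x (inverse (Suc n))"] by simp
  qed simp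
  have "{x} \<in> null_sets \<mu>"
    using assms(2) by (simp add: null_sets_def sets_eq)
  then have "AE t in \<mu>. t \<noteq> x"
    by (rule AE_I') blast
  then show "AE t in \<mu>. (\<lambda>n. (f t - f x) / (complex_of_real t - Complex x (inverse (Suc n))))
      \<longlonglongrightarrow> diff_quot f f' x t"
  proof eventually_elim
    case (elim t)
    have "(\<lambda>n. Complex x (inverse (Suc n))) \<longlonglongrightarrow> complex_of_real x"
      using tendsto_Complex[OF tendsto_const LIMSEQ_inverse_real_of_nat] by (simp add: Complex_eq)
    then have "(\<lambda>n. (f t - f x) / (complex_of_real t - Complex x (inverse (Suc n))))
        \<longlonglongrightarrow> (f t - f x) / (complex_of_real t - complex_of_real x)"
      using elim by (intro tendsto_intros) auto
    moreover have "(f t - f x) / (complex_of_real t - complex_of_real x) = diff_quot f f' x t"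
      using elim by (simp add: diff_quot_def) (metis minus_diff_eq minus_divide_divide)
    ultimately show ?case by simp
  qed
  show "diff_quot f f' x \<in> borel_measurable \<mu>"
    unfolding borel_measurable_iff diff_quot_def by measurable
  show "(\<lambda>t. (f t - f x) / (complex_of_real t - Complex x (inverse (Suc n)))) \<in> borel_measurable \<mu>"
    for n unfolding borel_measurable_iff by measurable
qed

end

locale rank_one_spectral_map = cauchy_measure \<mu> for \<mu> +
  fixes \<mu>\<alpha> :: "real measure" and \<alpha> :: real and V :: "(real \<Rightarrow> complex) \<Rightarrow> real \<Rightarrow> complex"
  assumes sets_eq_\<alpha>: "sets \<mu>\<alpha> = sets borel"
    and V_maps: "\<And>g. sq_int \<mu> g \<Longrightarrow> sq_int \<mu>\<alpha> (V g)"
    and V_linear: "\<And>g h c. sq_int \<mu> g \<Longrightarrow> sq_int \<mu> h \<Longrightarrow>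
      AE s in \<mu>\<alpha>. V (\<lambda>t. g t + c * h t) s = V g s + c * V h s"
    and V_isometric: "\<And>g. sq_int \<mu> g \<Longrightarrow>
      (\<integral>s. (cmod (V g s))\<^sup>2 \<partial>\<mu>\<alpha>) = (\<integral>t. (cmod (g t))\<^sup>2 \<partial>\<mu>)"
    and V_resolvent: "\<And>z g. Im z \<noteq> 0 \<Longrightarrow> sq_int \<mu> g \<Longrightarrow>
      AE s in \<mu>\<alpha>. V (res_A \<mu> \<alpha> z g) s = V g s / (complex_of_real s - z)"
    and V_one: "\<And>z. Im z \<noteq> 0 \<Longrightarrow>
      AE s in \<mu>\<alpha>. V (res_A_one \<mu> \<alpha> z) s = 1 / (complex_of_real s - z)"
begin

lemma V_zero: "AE s in \<mu>\<alpha>. V (\<lambda>_. 0) s = 0"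
proof -
  have zero: "sq_int \<mu> (\<lambda>_. 0)" by (simp add: sq_int_def)
  then have "integrable \<mu>\<alpha> (\<lambda>s. (cmod (V (\<lambda>_. 0) s))\<^sup>2)"
    using V_maps by (simp add: sq_int_def)
  moreover have "(\<integral>s. (cmod (V (\<lambda>_. 0) s))\<^sup>2 \<partial>\<mu>\<alpha>) = 0"
    using V_isometric[OF zero] by simp
  ultimately have "AE s in \<mu>\<alpha>. (cmod (V (\<lambda>_. 0) s))\<^sup>2 = 0"
    by (subst (asm) integral_nonneg_eq_0_iff_AE) auto
  then show ?thesis by eventually_elim simp
qed

lemma nn_integral_V_sq:
  assumes "sq_int \<mu> g"
  shows "(\<integral>\<^sup>+ s. ennreal ((cmod (V g s))\<^sup>2) \<partial>\<mu>\<alpha>) = ennreal (\<integral>t. (cmod (g t))\<^sup>2 \<partial>\<mu>)"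
  using V_maps[OF assms] V_isometric[OF assms]
  by (subst nn_integral_eq_integral) (auto simp: sq_int_def)

lemma
  assumes "Im z \<noteq> 0"
  shows sq_int_cauchy_kernel: "sq_int \<mu> (\<lambda>t. 1 / (complex_of_real t - z))"
    and integrable_cauchy_kernel: "integrable \<mu> (\<lambda>t. 1 / (complex_of_real t - z))"
  using norm_cauchy_kernel_le_weight[OF assms]
  by (auto intro!: sq_int_if_le_weight integrable_if_le_weight)

lemma cauchy_kernel_nonzero: "Im z \<noteq> 0 \<Longrightarrow> complex_of_real t - z \<noteq> 0"
  by (auto simp: complex_eq_iff)

text \<open>If \<open>1 + \<alpha> F(z)\<close> vanished, \<open>res_A_one\<close> would be \<open>0\<close> (as \<open>1 / 0 = 0\<close>) while \<open>V\<close> maps it to a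
  nonzero function.\<close>

lemma resolvent_denominator_nonzero:
  assumes "emeasure \<mu>\<alpha> (space \<mu>\<alpha>) \<noteq> 0" and "Im z \<noteq> 0"
  shows "1 + complex_of_real \<alpha> * cauchy_transform \<mu> z \<noteq> 0"
proof
  assume "1 + complex_of_real \<alpha> * cauchy_transform \<mu> z = 0"
  then have "res_A_one \<mu> \<alpha> z = (\<lambda>_. 0)"
    by (simp add: res_A_one_def)
  then have "AE s in \<mu>\<alpha>. V (\<lambda>_. 0) s = 1 / (complex_of_real s - z)"
    using V_one[OF assms(2)] by simp
  with V_zero have "AE s in \<mu>\<alpha>. False"
    by eventually_elim (use cauchy_kernel_nonzero[OF assms(2)] in simp)
  with assms(1) show False by (simp add: eventually_False ae_filter_eq_bot_iff)
qed

lemma V_cauchy_kernel: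
  assumes "emeasure \<mu>\<alpha> (space \<mu>\<alpha>) \<noteq> 0" and "Im z \<noteq> 0"
  shows "AE s in \<mu>\<alpha>. V (\<lambda>t. 1 / (complex_of_real t - z)) s
    = (1 + complex_of_real \<alpha> * cauchy_transform \<mu> z) / (complex_of_real s - z)"
proof -
  let ?D = "1 + complex_of_real \<alpha> * cauchy_transform \<mu> z"
  have "res_A_one \<mu> \<alpha> z = (\<lambda>t. 0 + 1 / ?D * (1 / (complex_of_real t - z)))"
    by (simp add: res_A_one_def)
  then have "AE s in \<mu>\<alpha>. V (\<lambda>t. 0 + 1 / ?D * (1 / (complex_of_real t - z))) s
      = 1 / (complex_of_real s - z)"
    using V_one[OF assms(2)] by simp
  moreover have "AE s in \<mu>\<alpha>. V (\<lambda>t. 0 + 1 / ?D * (1 / (complex_of_real t - z))) s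
      = V (\<lambda>_. 0) s + 1 / ?D * V (\<lambda>t. 1 / (complex_of_real t - z)) s"
    using sq_int_cauchy_kernel[OF assms(2)] by (intro V_linear) (auto simp: sq_int_def)
  ultimately show ?thesis
    using V_zero
    by eventually_elim (use resolvent_denominator_nonzero[OF assms] in \<open>simp add: field_simps\<close>)
qed

lemma V_eq_resolvent_quotient:
  assumes nontrivial: "emeasure \<mu>\<alpha> (space \<mu>\<alpha>) \<noteq> 0" and z: "Im z \<noteq> 0"
    and f: "sq_int \<mu> f" and g: "sq_int \<mu> (\<lambda>t. (f t - c) / (complex_of_real t - z))"
    and f_int: "integrable \<mu> (\<lambda>t. f t / (complex_of_real t - z))"
  shows "AE s in \<mu>\<alpha>. V f s = (complex_of_real s - z) * V (\<lambda>t. (f t - c) / (complex_of_real t - z)) s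
    + (c - complex_of_real \<alpha> * (\<integral>t. (f t - c) / (complex_of_real t - z) \<partial>\<mu>))"
proof -
  let ?g = "\<lambda>t. (f t - c) / (complex_of_real t - z)" and ?k = "\<lambda>t. 1 / (complex_of_real t - z)"
  define D where "D = 1 + complex_of_real \<alpha> * cauchy_transform \<mu> z"
  define I where "I = (\<integral>t. f t / (complex_of_real t - z) \<partial>\<mu>)"
  define c' where "c' = c - complex_of_real \<alpha> * I / D"
  have "D \<noteq> 0"
    using resolvent_denominator_nonzero[OF nontrivial z] by (simp add: D_def)
  have res_eq: "res_A \<mu> \<alpha> z f = (\<lambda>t. ?g t + c' * ?k t)"
    unfolding res_A_def D_def[symmetric] I_def[symmetric] c'_def
    by (simp add: diff_divide_distrib algebra_simps)
  have "(\<integral>t. c / (complex_of_real t - z) \<partial>\<mu>) = c * cauchy_transform \<mu> z"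
    unfolding cauchy_transform_def by (simp flip: integral_mult_right_zero)
  moreover have "integrable \<mu> (\<lambda>t. c / (complex_of_real t - z))"
    using integrable_mult_right[OF integrable_cauchy_kernel[OF z], of c] by simp
  ultimately have "(\<integral>t. ?g t \<partial>\<mu>) = I - c * cauchy_transform \<mu> z"
    using f_int by (simp add: diff_divide_distrib I_def)
  moreover have "c' * D = c * D - complex_of_real \<alpha> * I"
    using \<open>D \<noteq> 0\<close> by (simp add: c'_def left_diff_distrib)
  then have "c' * D = c - complex_of_real \<alpha> * (I - c * cauchy_transform \<mu> z)"
    by (simp add: D_def algebra_simps)
  ultimately have const_eq: "c' * D = c - complex_of_real \<alpha> * (\<integral>t. ?g t \<partial>\<mu>)"
    by simp
  have "AE s in \<mu>\<alpha>. V (\<lambda>t. ?g t + c' * ?k t) s = V ?g s + c' * V ?k s"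
    using g sq_int_cauchy_kernel[OF z] by (rule V_linear)
  then show ?thesis
    using V_resolvent[OF z f] V_cauchy_kernel[OF nontrivial z] unfolding res_eq D_def[symmetric]
  proof eventually_elim
    case (elim s)
    have "V f s / (complex_of_real s - z) = V ?g s + c' * (D / (complex_of_real s - z))"
      using elim by simp
    then have "V f s = (complex_of_real s - z) * V ?g s + c' * D"
      using cauchy_kernel_nonzero[OF z, of s] by (simp add: field_simps)
    then show ?case
      using const_eq by simp
  qed
qed

text \<open>\<open>V_approx f z\<close> is the constant term in \<open>V_eq_resolvent_quotient\<close> for \<open>c = f (Re z)\<close>.\<close>

definition V_approx :: "(real \<Rightarrow> complex) \<Rightarrow> complex \<Rightarrow> complex"
  where "V_approx f z =
    f (Re z) - complex_of_real \<alpha> * (\<integral>t. (f t - f (Re z)) / (complex_of_real t - z) \<partial>\<mu>)"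

definition V_formula :: "(real \<Rightarrow> complex) \<Rightarrow> (real \<Rightarrow> complex) \<Rightarrow> real \<Rightarrow> complex"
  where "V_formula f f' s = f s - complex_of_real \<alpha> * (\<integral>t. diff_quot f f' s t \<partial>\<mu>)"

lemma emeasure_deviation_from_V_approx_le:
  assumes nontrivial: "emeasure \<mu>\<alpha> (space \<mu>\<alpha>) \<noteq> 0"
    and bdf: "bounded_derivative_fun f f' L M" and f: "sq_int \<mu> f"
    and z: "Re z \<in> {a..b}" "\<bar>Re z\<bar> \<le> R" "0 < Im z" "Im z \<le> b - a" and "0 < \<delta>"
  shows "emeasure \<mu>\<alpha> {s \<in> {a..b}. \<delta> < cmod (V f s - V_approx f z)}
    \<le> ennreal (4 * (b - a)\<^sup>2 / \<delta>\<^sup>2 * ((quotient_bound L M R)\<^sup>2 * (\<integral>t. cauchy_weight t \<partial>\<mu>)))"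
proof -
  interpret bounded_derivative_fun f f' L M by fact
  let ?g = "\<lambda>t. (f t - f (Re z)) / (complex_of_real t - z)"
  have "Im z \<noteq> 0" using z by simp
  have g_le: "cmod (?g t) \<le> quotient_bound L M R * cauchy_weight t" for t
    using abs_Re_le_cmod[of "complex_of_real t - z"] z(2)
    by (intro norm_diff_quotient_le_weight) auto
  have g: "sq_int \<mu> ?g" by (rule sq_int_if_le_weight[OF _ g_le]) measurable
  have f_int: "integrable \<mu> (\<lambda>t. f t / (complex_of_real t - z))"
  proof (rule integrable_if_le_weight)
    fix t
    have "cmod (f t / (complex_of_real t - z)) = cmod (f t) * cmod (1 / (complex_of_real t - z))"
      by (simp add: norm_divide)
    also have "\<dots> \<le> M * ((1 + (1 + cmod z) / \<bar>Im z\<bar>) * cauchy_weight t)"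
      using norm_cauchy_kernel_le_weight[OF \<open>Im z \<noteq> 0\<close>] norm_le bound_nonneg
      by (intro mult_mono) auto
    finally show "cmod (f t / (complex_of_real t - z))
        \<le> M * (1 + (1 + cmod z) / \<bar>Im z\<bar>) * cauchy_weight t"
      by simp
  qed measurable
  have "AE s in \<mu>\<alpha>. V f s - V_approx f z = (complex_of_real s - z) * V ?g s"
    using V_eq_resolvent_quotient[OF nontrivial \<open>Im z \<noteq> 0\<close> f g f_int]
    by eventually_elim (simp add: V_approx_def)
  moreover have "cmod (complex_of_real s - z) \<le> 2 * (b - a)" if "s \<in> {a..b}" for s
    using cmod_le[of "complex_of_real s - z"] that z by auto
  ultimately have "emeasure \<mu>\<alpha> {s \<in> {a..b}. \<delta> < cmod (V f s - V_approx f z)}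
      \<le> ennreal ((2 * (b - a))\<^sup>2 / \<delta>\<^sup>2) * (\<integral>\<^sup>+ s. ennreal ((cmod (V ?g s))\<^sup>2) \<partial>\<mu>\<alpha>)"
    using V_maps[OF f] V_maps[OF g] \<open>0 < \<delta>\<close>
    by (intro emeasure_deviation_le_Chebyshev) (auto simp: sets_eq_\<alpha> sq_int_def)
  also have "\<dots> \<le> ennreal (4 * (b - a)\<^sup>2 / \<delta>\<^sup>2) *
      ennreal ((quotient_bound L M R)\<^sup>2 * (\<integral>t. cauchy_weight t \<partial>\<mu>))"
    unfolding nn_integral_V_sq[OF g] power_mult_distrib
    by (intro mult_mono ennreal_leI integral_sq_le_weight[OF _ g_le]) (auto simp: power2_eq_square)
  finally show ?thesis
    by (simp add: ennreal_mult'[symmetric])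
qed

lemma tendsto_V_approx_at_non_atom:
  assumes "bounded_derivative_fun f f' L M" and "emeasure \<mu> {x} = 0"
  shows "(\<lambda>n. V_approx f (Complex x (inverse (Suc n)))) \<longlonglongrightarrow> V_formula f f' x"
proof -
  have "V_approx f (Complex x (inverse (Suc n))) = f x - complex_of_real \<alpha> *
      (\<integral>t. (f t - f x) / (complex_of_real t - Complex x (inverse (Suc n))) \<partial>\<mu>)" for n
    by (simp add: V_approx_def)
  then show ?thesis
    unfolding V_formula_def using tendsto_integral_quotient_at_non_atom[OF assms]
    by (simp only:) (intro tendsto_intros)
qed

lemma local_deviation_bound:
  assumes nontrivial: "emeasure \<mu>\<alpha> (space \<mu>\<alpha>) \<noteq> 0"
    and bdf: "bounded_derivative_fun f f' L M" and f: "sq_int \<mu> f" and "0 < \<delta>"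
  shows "\<exists>C. \<forall>a b. -R \<le> a \<longrightarrow> a < b \<longrightarrow> b \<le> R \<longrightarrow> (\<exists>x\<in>{a..b}.
    emeasure \<mu>\<alpha> {s \<in> {a..b}. \<delta> < cmod (V f s - V_formula f f' x)} \<le> ennreal (C * (b - a)\<^sup>2))"
proof (intro exI allI impI)
  define Q where "Q = (quotient_bound L M R)\<^sup>2 * (\<integral>t. cauchy_weight t \<partial>\<mu>)"
  fix a b assume ab: "-R \<le> a" "a < b" "b \<le> R"
  obtain x where x: "x \<in> {a<..<b}" and atom: "emeasure \<mu> {x} = 0"
    using exists_non_atom[OF \<open>a < b\<close>] .
  have [measurable]: "V f \<in> borel_measurable \<mu>\<alpha>" "{a..b} \<in> sets \<mu>\<alpha>"
    using V_maps[OF f] by (auto simp: sq_int_def sets_eq_\<alpha>)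
  have "\<forall>\<^sub>F n in sequentially. dist (V_approx f (Complex x (inverse (Suc n)))) (V_formula f f' x) < \<delta> / 2
      \<and> inverse (Suc n) < b - a"
    using \<open>0 < \<delta>\<close> \<open>a < b\<close> tendsto_V_approx_at_non_atom[OF bdf atom]
    by (intro eventually_conj tendstoD order_tendstoD(2)[OF LIMSEQ_inverse_real_of_nat]) auto
  then obtain \<epsilon> where close: "cmod (V_approx f (Complex x \<epsilon>) - V_formula f f' x) < \<delta> / 2"
    and \<epsilon>: "0 < \<epsilon>" "\<epsilon> < b - a"
    by (auto simp: eventually_sequentially dist_norm)
  have "{s \<in> {a..b}. \<delta> < cmod (V f s - V_formula f f' x)}
      \<subseteq> {s \<in> {a..b}. \<delta> / 2 < cmod (V f s - V_approx f (Complex x \<epsilon>))}"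
  proof safe
    fix s assume "\<delta> < cmod (V f s - V_formula f f' x)"
    moreover have "cmod (V f s - V_formula f f' x)
        \<le> cmod (V f s - V_approx f (Complex x \<epsilon>)) + cmod (V_approx f (Complex x \<epsilon>) - V_formula f f' x)"
      using dist_triangle[of "V f s" "V_formula f f' x" "V_approx f (Complex x \<epsilon>)"] by (simp only: dist_norm)
    ultimately show "\<delta> / 2 < cmod (V f s - V_approx f (Complex x \<epsilon>))"
      using close by linarith
  qed
  then have "emeasure \<mu>\<alpha> {s \<in> {a..b}. \<delta> < cmod (V f s - V_formula f f' x)}
      \<le> emeasure \<mu>\<alpha> {s \<in> {a..b}. \<delta> / 2 < cmod (V f s - V_approx f (Complex x \<epsilon>))}"
    by (rule emeasure_mono) measurable
  also have "\<dots> \<le> ennreal (4 * (b - a)\<^sup>2 / (\<delta> / 2)\<^sup>2 * Q)"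
    unfolding Q_def using x ab \<open>0 < \<delta>\<close> \<epsilon>
    by (intro emeasure_deviation_from_V_approx_le[OF nontrivial bdf f]) auto
  also have "\<dots> = ennreal (16 * Q / \<delta>\<^sup>2 * (b - a)\<^sup>2)"
    by (simp add: power_divide field_simps)
  finally show "\<exists>x\<in>{a..b}. emeasure \<mu>\<alpha> {s \<in> {a..b}. \<delta> < cmod (V f s - V_formula f f' x)}
      \<le> ennreal (16 * Q / \<delta>\<^sup>2 * (b - a)\<^sup>2)"
    using x by (intro bexI[where x = x]) auto
qed

theorem V_eq_V_formula:
  assumes bdf: "bounded_derivative_fun f f' L M" and f: "sq_int \<mu> f"
  shows "AE s in \<mu>\<alpha>. V f s = V_formula f f' s"
proof (cases "emeasure \<mu>\<alpha> (space \<mu>\<alpha>) = 0")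
  case True
  then show ?thesis by (intro AE_I[where N = "space \<mu>\<alpha>"]) auto
next
  case False
  show ?thesis
  proof (rule AE_eq_if_local_deviation_bound[OF sets_eq_\<alpha>])
    show "V f \<in> borel_measurable \<mu>\<alpha>"
      using V_maps[OF f] by (simp add: sq_int_def)
    show "continuous_on UNIV (V_formula f f')"
      using bounded_derivative_fun.continuous[OF bdf] continuous_integral_diff_quot[OF bdf]
      unfolding V_formula_def by (intro continuous_intros)
  qed (rule local_deviation_bound[OF False bdf f])
qed

end

theorem theorem2p1:
  fixes \<mu> \<mu>\<alpha> :: "real measure" and \<alpha> :: real
    and V :: "(real \<Rightarrow> complex) \<Rightarrow> (real \<Rightarrow> complex)"
    and f f' :: "real \<Rightarrow> complex"
  assumes mu_borel: "sets \<mu> = sets borel"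
    and mu_nonzero: "emeasure \<mu> (space \<mu>) \<noteq> 0"
    and mu_growth: "(\<integral>\<^sup>+ t. ennreal (1 / (1 + \<bar>t\<bar>)) \<partial>\<mu>) < \<infinity>"
    and mua_borel: "sets \<mu>\<alpha> = sets borel"
    and mua_int: "\<And>z. Im z \<noteq> 0 \<Longrightarrow> integrable \<mu>\<alpha> (\<lambda>s. 1 / (complex_of_real s - z))"
    and mua_transform: "\<And>z. Im z \<noteq> 0 \<Longrightarrow>
          cauchy_transform \<mu> z / (1 + complex_of_real \<alpha> * cauchy_transform \<mu> z)
            = cauchy_transform \<mu>\<alpha> z"
    and V_maps: "\<And>g. sq_int \<mu> g \<Longrightarrow> sq_int \<mu>\<alpha> (V g)"
    and V_linear: "\<And>g h c. sq_int \<mu> g \<Longrightarrow> sq_int \<mu> h \<Longrightarrow>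
          AE s in \<mu>\<alpha>. V (\<lambda>t. g t + c * h t) s = V g s + c * V h s"
    and V_isometric: "\<And>g. sq_int \<mu> g \<Longrightarrow>
          (\<integral>s. (cmod (V g s))\<^sup>2 \<partial>\<mu>\<alpha>) = (\<integral>t. (cmod (g t))\<^sup>2 \<partial>\<mu>)"
    and V_onto: "\<And>h. sq_int \<mu>\<alpha> h \<Longrightarrow> \<exists>g. sq_int \<mu> g \<and> (AE s in \<mu>\<alpha>. V g s = h s)"
    and V_resolvent: "\<And>z g. Im z \<noteq> 0 \<Longrightarrow> sq_int \<mu> g \<Longrightarrow>
          AE s in \<mu>\<alpha>. V (res_A \<mu> \<alpha> z g) s = V g s / (complex_of_real s - z)"
    and V_one: "\<And>z. Im z \<noteq> 0 \<Longrightarrow>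
          AE s in \<mu>\<alpha>. V (res_A_one \<mu> \<alpha> z) s = 1 / (complex_of_real s - z)"
    and f_deriv: "\<And>x. (f has_vector_derivative f' x) (at x)"
    and f'_cont: "continuous_on UNIV f'"
    and f_supp: "compact (closure {x. f x \<noteq> 0})"
  shows "AE s in \<mu>\<alpha>. V f s = f s - complex_of_real \<alpha> *
           (\<integral>t. (if t = s then f' s else (f s - f t) / complex_of_real (s - t)) \<partial>\<mu>)"
proof -
  interpret rank_one_spectral_map \<mu> \<mu>\<alpha> \<alpha> V
    using mu_borel mu_growth mua_borel V_maps V_linear V_isometric V_resolvent V_one
    by unfold_locales
  obtain L M where bdf: "bounded_derivative_fun f f' L M"
    using bounded_derivative_fun_if_compact_support[OF f_deriv f'_cont f_supp] .
  have "sq_int \<mu> f"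
    using bounded_derivative_fun.norm_le[OF bdf] f_supp
    by (intro sq_int_if_compact_support bounded_derivative_fun.borel_measurable[OF bdf])
  from V_eq_V_formula[OF bdf this] show ?thesis
    unfolding V_formula_def diff_quot_def .
qed

end
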